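(* Let $\lambda$ be an infinite cardinal and $\theta$ an infinite regular cardinal. (1) If $\theta=\mathrm{cf}(\lambda)<\lambda$, then $m(\theta,\lambda)>\lambda$; (2) if $\theta<\lambda$, then $m(\theta,\lambda)\ge\lambda$; (3) if $\theta<\lambda<\theta^{+\theta}$, then $m(\theta,\lambda)=\lambda$.
   Context: $m(\theta,\lambda)$ is the least size of a family $\mathcal Y\subseteq[\lambda]^\theta$ such that for every $X\in[\lambda]^\theta$ there is $Y\in\mathcal Y$ with $|X\cap Y|=\theta$. *)

theory Defs
  imports Main
begin

unbundle cardinal_syntax

text \<open>Cardinals are represented by sets and compared with the library's
  cardinal orders: the cardinal of a set A is card_of A, compared via
  ordLeq, ordLess, ordIso.  The cardinal lambda is represented by a set L,
  the cardinal theta by a set T.\<close>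

definition subsets_of_size :: "'b set \<Rightarrow> 'a set \<Rightarrow> 'a set set" where
  "subsets_of_size T A = {X. X \<subseteq> A \<and> card_of X =o card_of T}"

text \<open>The families whose least size is m(theta,lambda).\<close>
definition m_family :: "'b set \<Rightarrow> 'a set \<Rightarrow> 'a set set \<Rightarrow> bool" where
  "m_family T L Ys \<longleftrightarrow> Ys \<subseteq> subsets_of_size T L \<and>
     (\<forall>X \<in> subsets_of_size T L. \<exists>Y \<in> Ys. card_of (X \<inter> Y) =o card_of T)"

text \<open>m(theta,lambda) > kappa, m(theta,lambda) >= kappa, m(theta,lambda) <= kappa,
  with kappa = card_of K (m is the least size of an m_family).\<close>
definition m_greater :: "'b set \<Rightarrow> 'a set \<Rightarrow> 'c set \<Rightarrow> bool" where
  "m_greater T L K \<longleftrightarrow> (\<forall>Ys. m_family T L Ys \<longrightarrow> card_of K <o card_of Ys)"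

definition m_geq :: "'b set \<Rightarrow> 'a set \<Rightarrow> 'c set \<Rightarrow> bool" where
  "m_geq T L K \<longleftrightarrow> (\<forall>Ys. m_family T L Ys \<longrightarrow> card_of K \<le>o card_of Ys)"

definition m_leq :: "'b set \<Rightarrow> 'a set \<Rightarrow> 'c set \<Rightarrow> bool" where
  "m_leq T L K \<longleftrightarrow> (\<exists>Ys. m_family T L Ys \<and> card_of Ys \<le>o card_of K)"

text \<open>cf(lambda) = theta: the least size of a cofinal subset of L, where L is
  well-ordered by its initial (cardinal) well-order card_of L.\<close>
definition cf_is :: "'b set \<Rightarrow> 'a set \<Rightarrow> bool" where
  "cf_is T L \<longleftrightarrow> (\<exists>K \<subseteq> L. cofinal K (card_of L) \<and> card_of K =o card_of T) \<and>
     (\<forall>K \<subseteq> L. cofinal K (card_of L) \<longrightarrow> card_of T \<le>o card_of K)"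

text \<open>lambda < theta^{+theta} (used for infinite theta < lambda): there are
  fewer than theta cardinals mu with theta <= mu < lambda, i.e. there is no
  T-indexed family of subsets of L with pairwise distinct cardinalities all
  lying in the interval [theta, lambda).\<close>
definition below_plus_theta :: "'b set \<Rightarrow> 'a set \<Rightarrow> bool" where
  "below_plus_theta T L \<longleftrightarrow> \<not> (\<exists>A :: 'b \<Rightarrow> 'a set.
      (\<forall>t \<in> T. A t \<subseteq> L \<and> card_of T \<le>o card_of (A t) \<and> card_of (A t) <o card_of L) \<and>
      (\<forall>s \<in> T. \<forall>t \<in> T. s \<noteq> t \<longrightarrow> \<not> (card_of (A s) =o card_of (A t))))"

end

theory Submission
  imports Defs
begin

(* (2): fewer than lambda sets of size theta cover fewer than lambda points, and
   theta of the remaining points form a set missed by all of them.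

   (1): when cf lambda = theta, lambda is covered by theta sets D_t of size < lambda
   such that every point lies in D_t for all but fewer than theta indices t.  Given
   lambda candidate sets Y_alpha, choose x_t outside every Y_alpha with alpha in D_t,
   in pairwise disjoint copies of lambda so that the x_t are distinct; then {x_t}
   meets each Y_alpha in fewer than theta points.

   (3): by induction on the cardinal mu of A, theta <= mu <= lambda, the families for
   the initial segments of A combine to a family of size mu for [A]^theta.  This works
   because every X in [A]^theta has theta points in one initial segment: if mu is
   regular since X is bounded, and if mu is singular since below theta^{+theta} the
   cofinality of mu is smaller than the regular theta. *)

lemma card_of_insert_ordLess_infinite:
  assumes "infinite B" "|S| <o |B|"
  shows "|insert x S| <o |B|"
proof -
  have "|{x}| <o |B|"
    using finite_ordLess_infinite[OF card_of_Well_order card_of_Well_order, of "{x}" B] assms(1)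
    by (simp add: Field_card_of)
  then have "|{x} \<union> S| <o |B|" using card_of_Un_ordLess_infinite assms by blast
  then show ?thesis by simp
qed

lemma card_of_ordLess_if_not_ordLeq: "\<not> |A| \<le>o |B| \<Longrightarrow> |B| <o |A|"
  by (rule not_ordLeq_iff_ordLess[OF card_of_Well_order card_of_Well_order, THEN iffD1])

lemma card_of_ordLeq_if_not_ordLess: "\<not> |A| <o |B| \<Longrightarrow> |B| \<le>o |A|"
  by (rule not_ordLess_iff_ordLeq[OF card_of_Well_order card_of_Well_order, THEN iffD1])

lemma ordLeq_obtain_subset_ordIso:
  assumes "|T| \<le>o |S|"
  obtains X where "X \<subseteq> S" "|X| =o |T|"
proof -
  obtain f where f: "inj_on f T" "f ` T \<subseteq> S"
    using card_of_ordLeq[THEN iffD2, OF assms] by blast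
  from f(1) have "bij_betw f T (f ` T)" by (simp add: bij_betw_def)
  then have "|f ` T| =o |T|" by (rule ordIso_symmetric[OF card_of_ordIsoI])
  then show thesis using f(2) that by blast
qed

lemma card_of_subset_ordIso:
  assumes "S \<subseteq> X" "|X| =o |T|" "|T| \<le>o |S|"
  shows "|S| =o |T|"
  using ordLeq_ordIso_trans[OF card_of_mono1[OF assms(1)] assms(2)] assms(3)
  by (simp add: ordIso_iff_ordLeq)

lemma card_of_Diff_ordLess_infinite:
  assumes "infinite A" "|B| <o |A|"
  shows "|A - B| =o |A|"
proof -
  have "\<not> |A - B| <o |A|"
  proof
    assume "|A - B| <o |A|"
    then have "|(A - B) \<union> B| <o |A|" using card_of_Un_ordLess_infinite assms by blast
    then show False using card_of_mono1[of A "(A - B) \<union> B"] not_ordLess_ordLeq by blast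
  qed
  then show ?thesis
    using card_of_mono1[of "A - B" A] ordLeq_iff_ordLess_or_ordIso by blast
qed

lemma card_of_UNION_ordLess_bounded:
  assumes "infinite T" "|I| <o |L|" "|T| <o |L|" "\<forall>i\<in>I. |B i| \<le>o |T|"
  shows "|\<Union>i\<in>I. B i| <o |L|"
proof (cases "|I| \<le>o |T|")
  case True
  then have "|\<Union>i\<in>I. B i| \<le>o |T|"
    using card_of_UNION_ordLeq_infinite[OF assms(1) True assms(4)] by simp
  then show ?thesis using ordLeq_ordLess_trans[OF _ assms(3)] by blast
next
  case False
  then have TI: "|T| \<le>o |I|" using card_of_ordLess_if_not_ordLeq ordLess_imp_ordLeq by blast
  then have "infinite I" using assms(1) card_of_ordLeq_finite by blast
  moreover have "\<forall>i\<in>I. |B i| \<le>o |I|" using assms(4) TI ordLeq_transitive by blast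
  ultimately have "|\<Union>i\<in>I. B i| \<le>o |I|"
    using card_of_UNION_ordLeq_infinite[OF _ ordLeq_reflexive[OF card_of_Well_order]] by blast
  then show ?thesis using ordLeq_ordLess_trans[OF _ assms(2)] by blast
qed

lemma wo_rel_card_of: "wo_rel |A|"
  using card_of_Well_order wo_rel_def by blast

lemma trans_card_of: "trans |A|"
  by (rule wo_rel.TRANS[OF wo_rel_card_of])

lemma antisym_card_of: "antisym |A|"
  by (rule wo_rel.ANTISYM[OF wo_rel_card_of])

lemma card_of_rel_refl: "a \<in> A \<Longrightarrow> (a, a) \<in> |A|"
  using wo_rel.REFL[OF wo_rel_card_of[of A]] by (simp add: refl_on_def Field_card_of)

lemma card_of_rel_total: "a \<in> A \<Longrightarrow> b \<in> A \<Longrightarrow> (a, b) \<in> |A| \<or> (b, a) \<in> |A|"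
  using wo_rel.TOTALS[OF wo_rel_card_of[of A]] by (simp add: Field_card_of)

lemma card_of_rel_if_notin_underS:
  assumes "a \<in> A" "x \<in> A" "x \<notin> underS |A| a"
  shows "(a, x) \<in> |A|"
proof (cases "x = a")
  case False
  then show ?thesis using assms card_of_rel_total[OF assms(1,2)] unfolding underS_def by blast
qed (use card_of_rel_refl[OF assms(1)] in simp)

lemma bounded_if_not_cofinal:
  assumes "S \<subseteq> A" "\<not> cofinal S |A|"
  shows "\<exists>a\<in>A. \<forall>b\<in>S. (b, a) \<in> |A|"
proof -
  obtain a where a: "a \<in> A" "\<forall>b\<in>S. a = b \<or> (a, b) \<notin> |A|"
    using assms(2) unfolding cofinal_def Field_card_of by blast
  have "(b, a) \<in> |A|" if "b \<in> S" for b
  proof (cases "a = b")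
    case False
    then show ?thesis using a card_of_rel_total[of a A b] assms(1) that by blast
  qed (use card_of_rel_refl[OF a(1)] in simp)
  then show ?thesis using a(1) by blast
qed

lemma card_of_underS_ordLess: "a \<in> A \<Longrightarrow> |underS |A| a| <o |A|"
  using card_of_underS[OF card_of_Card_order, of a A] by (simp add: Field_card_of)

lemma card_of_under_ordLess:
  assumes "infinite A" "a \<in> A"
  shows "|under |A| a| <o |A|"
proof -
  have "under |A| a = insert a (underS |A| a)"
    using Refl_under_underS[OF wo_rel.REFL[OF wo_rel_card_of]] assms(2)
    by (simp add: Field_card_of)
  then show ?thesis
    using card_of_insert_ordLess_infinite[OF assms(1) card_of_underS_ordLess[OF assms(2)]] by simp
qed

section \<open>Lower bounds\<close>

lemma card_of_m_family_member:
  assumes "m_family T L Ys" "Y \<in> Ys"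
  shows "|Y| \<le>o |T|"
  using assms ordIso_imp_ordLeq unfolding m_family_def subsets_of_size_def by blast

lemma m_geq_if_ordLess:
  assumes L: "infinite L" and T: "infinite T" and TL: "|T| <o |L|"
  shows "m_geq T L L"
  unfolding m_geq_def
proof (intro allI impI)
  fix Ys assume fam: "m_family T L Ys"
  show "|L| \<le>o |Ys|"
  proof (rule ccontr)
    assume "\<not> |L| \<le>o |Ys|"
    then have "|Ys| <o |L|" by (rule card_of_ordLess_if_not_ordLeq)
    moreover have "\<forall>Y\<in>Ys. |Y| \<le>o |T|"
      using card_of_m_family_member[OF fam] by blast
    ultimately have "|\<Union>Ys| <o |L|"
      using card_of_UNION_ordLess_bounded[OF T _ TL, of Ys id] by simp
    then have "|T| \<le>o |L - \<Union>Ys|"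
      using ordLeq_ordIso_trans[OF ordLess_imp_ordLeq[OF TL]
          ordIso_symmetric[OF card_of_Diff_ordLess_infinite[OF L]]] by blast
    then obtain X where X: "X \<subseteq> L - \<Union>Ys" "|X| =o |T|"
      by (rule ordLeq_obtain_subset_ordIso)
    then obtain Y where "Y \<in> Ys" "|X \<inter> Y| =o |T|"
      using fam unfolding m_family_def subsets_of_size_def by blast
    moreover have "X \<inter> Y = {}" using X \<open>Y \<in> Ys\<close> by blast
    ultimately show False using T card_of_ordIso_finite by fastforce
  qed
qed

definition eventual_small_cover :: "'b set \<Rightarrow> 'a set \<Rightarrow> ('b \<Rightarrow> 'a set) \<Rightarrow> bool" where
  "eventual_small_cover T L D \<longleftrightarrow> (\<forall>t\<in>T. D t \<subseteq> L \<and> |D t| <o |L| ) \<and>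
     (\<forall>\<alpha>\<in>L. |{t\<in>T. \<alpha> \<notin> D t}| <o |T| )"

lemma obtain_disjoint_copies:
  assumes "infinite L" "|T| \<le>o |L|"
  obtains P where "\<forall>t\<in>T. P t \<subseteq> L \<and> |P t| =o |L|" "\<forall>s\<in>T. \<forall>t\<in>T. s \<noteq> t \<longrightarrow> P s \<inter> P t = {}"
proof -
  have "|T \<times> L| \<le>o |L|"
  proof (cases "T = {}")
    case False
    then show ?thesis
      using card_of_Times_infinite[OF assms(1) False assms(2)] ordIso_imp_ordLeq by blast
  qed (simp add: card_of_empty)
  then obtain e where e: "inj_on e (T \<times> L)" "e ` (T \<times> L) \<subseteq> L"
    using card_of_ordLeq[of "T \<times> L" L] by blast
  define P where "P t = (\<lambda>l. e (t, l)) ` L" for t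
  have "P t \<subseteq> L \<and> |P t| =o |L|" if t: "t \<in> T" for t
  proof
    show "P t \<subseteq> L" using e(2) t unfolding P_def by auto
    have "inj_on (\<lambda>l. e (t, l)) L"
    proof (rule inj_onI)
      fix l l' assume "l \<in> L" "l' \<in> L" and eq: "e (t, l) = e (t, l')"
      then show "l = l'" using inj_onD[OF e(1) eq] t by simp
    qed
    then have "bij_betw (\<lambda>l. e (t, l)) L (P t)" unfolding P_def by (simp add: bij_betw_def)
    then show "|P t| =o |L|" by (rule ordIso_symmetric[OF card_of_ordIsoI])
  qed
  moreover have "\<forall>s\<in>T. \<forall>t\<in>T. s \<noteq> t \<longrightarrow> P s \<inter> P t = {}"
    unfolding P_def
  proof (intro ballI impI)
    fix s t assume st: "s \<in> T" "t \<in> T" "s \<noteq> t"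
    have "e (s, l) \<noteq> e (t, l')" if "l \<in> L" "l' \<in> L" for l l'
      using inj_onD[OF e(1), of "(s, l)" "(t, l')"] st that by auto
    then show "(\<lambda>l. e (s, l)) ` L \<inter> (\<lambda>l. e (t, l)) ` L = {}" by blast
  qed
  ultimately show thesis using that by blast
qed

lemma obtain_diagonal_subset:
  assumes L: "infinite L" and T: "infinite T" and TL: "|T| <o |L|"
    and cover: "eventual_small_cover T L D" and g: "\<forall>\<alpha>\<in>L. |g \<alpha>| \<le>o |T|"
  obtains X where "X \<subseteq> L" "|X| =o |T|" "\<forall>\<alpha>\<in>L. |X \<inter> g \<alpha>| <o |T|"
proof -
  have D: "\<forall>t\<in>T. D t \<subseteq> L \<and> |D t| <o |L|"
    and D_eventually: "\<forall>\<alpha>\<in>L. |{t\<in>T. \<alpha> \<notin> D t}| <o |T|"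
    using cover unfolding eventual_small_cover_def by auto
  obtain P where P: "\<forall>t\<in>T. P t \<subseteq> L \<and> |P t| =o |L|"
    and disj: "\<forall>s\<in>T. \<forall>t\<in>T. s \<noteq> t \<longrightarrow> P s \<inter> P t = {}"
    using obtain_disjoint_copies[OF L ordLess_imp_ordLeq[OF TL]] by blast
  have "\<exists>y. y \<in> P t \<and> y \<notin> (\<Union>\<alpha>\<in>D t. g \<alpha>)" if t: "t \<in> T" for t
  proof (rule ccontr)
    assume "\<nexists>y. y \<in> P t \<and> y \<notin> (\<Union>\<alpha>\<in>D t. g \<alpha>)"
    then have sub: "P t \<subseteq> (\<Union>\<alpha>\<in>D t. g \<alpha>)" by blast
    have Dt: "D t \<subseteq> L" "|D t| <o |L|" using D t by auto
    have "|\<Union>\<alpha>\<in>D t. g \<alpha>| <o |L|"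
      using card_of_UNION_ordLess_bounded[OF T Dt(2) TL] g Dt(1) by blast
    then have "|P t| <o |L|" by (rule ordLeq_ordLess_trans[OF card_of_mono1[OF sub]])
    then show False using P t not_ordLess_ordIso by blast
  qed
  then obtain x where x: "\<forall>t\<in>T. x t \<in> P t \<and> x t \<notin> (\<Union>\<alpha>\<in>D t. g \<alpha>)"
    by (metis bchoice)
  have "inj_on x T"
  proof (rule inj_onI)
    fix s t assume st: "s \<in> T" "t \<in> T" "x s = x t"
    show "s = t"
    proof (rule ccontr)
      assume "s \<noteq> t"
      then have "P s \<inter> P t = {}" using disj st by blast
      moreover have "x s \<in> P s \<inter> P t" using x st by (metis IntI)
      ultimately show False by blast
    qed
  qed
  then have "bij_betw x T (x ` T)" by (simp add: bij_betw_def)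
  then have "|x ` T| =o |T|" by (rule ordIso_symmetric[OF card_of_ordIsoI])
  moreover have "x ` T \<subseteq> L" using x P by blast
  moreover have "|x ` T \<inter> g \<alpha>| <o |T|" if "\<alpha> \<in> L" for \<alpha>
  proof -
    have "x ` T \<inter> g \<alpha> \<subseteq> x ` {t\<in>T. \<alpha> \<notin> D t}" using x by blast
    then have "|x ` T \<inter> g \<alpha>| \<le>o |{t\<in>T. \<alpha> \<notin> D t}|"
      by (rule ordLeq_transitive[OF card_of_mono1 card_of_image])
    then show ?thesis using ordLeq_ordLess_trans D_eventually that by blast
  qed
  ultimately show thesis using that by blast
qed

lemma m_greater_if_eventual_small_cover:
  assumes "infinite L" "infinite T" "|T| <o |L|" "eventual_small_cover T L D"
  shows "m_greater T L L"
  unfolding m_greater_def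
proof (intro allI impI)
  fix Ys assume fam: "m_family T L Ys"
  show "|L| <o |Ys|"
  proof (rule ccontr)
    assume "\<not> |L| <o |Ys|"
    then have Ys: "|Ys| \<le>o |L|" by (rule card_of_ordLeq_if_not_ordLess)
    obtain g where g: "Ys \<subseteq> g ` L" "\<forall>\<alpha>\<in>L. |g \<alpha>| \<le>o |T|"
    proof (cases "Ys = {}")
      case True
      then show thesis using that[of "\<lambda>_. {}"] card_of_empty by blast
    next
      case False
      then obtain g where "g ` L = Ys" using card_of_ordLeq2[OF False, THEN iffD2, OF Ys] by blast
      then show thesis
        using that[of g] card_of_m_family_member[OF fam] by blast
    qed
    obtain X where X: "X \<subseteq> L" "|X| =o |T|" and small: "\<forall>\<alpha>\<in>L. |X \<inter> g \<alpha>| <o |T|"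
      using obtain_diagonal_subset[OF assms g(2)] by blast
    then have "X \<in> subsets_of_size T L" unfolding subsets_of_size_def by blast
    then obtain Y where "Y \<in> Ys" and XY: "|X \<inter> Y| =o |T|"
      using fam unfolding m_family_def by blast
    then obtain \<alpha> where "\<alpha> \<in> L" "Y = g \<alpha>" using g(1) by blast
    then show False using small XY not_ordLess_ordIso by blast
  qed
qed

lemma eventual_small_cover_if_cf:
  assumes T: "infinite T" and cf: "cf_is T L"
  shows "\<exists>D. eventual_small_cover T L D"
proof -
  obtain K where K: "K \<subseteq> L" "cofinal K |L|" "|K| =o |T|"
    using cf unfolding cf_is_def by blast
  obtain h where h: "bij_betw h T K"
    using card_of_ordIso[THEN iffD2, OF ordIso_symmetric[OF K(3)]] by blast
  define U where "U t = h ` under |T| t" for t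
  \<comment> \<open>Fewer than cf lambda = theta elements of K are not cofinal, so they have an upper bound.\<close>
  have "\<exists>a\<in>L. \<forall>b\<in>U t. (b, a) \<in> |L|" if t: "t \<in> T" for t
  proof (rule bounded_if_not_cofinal)
    show sub: "U t \<subseteq> L"
      using h K(1) under_Field[of "|T|" t] unfolding U_def bij_betw_def Field_card_of by blast
    have "|U t| <o |T|"
      unfolding U_def by (rule ordLeq_ordLess_trans[OF card_of_image card_of_under_ordLess[OF T t]])
    then show "\<not> cofinal (U t) |L|"
      using cf sub not_ordLess_ordLeq unfolding cf_is_def by blast
  qed
  then obtain f where f: "\<forall>t\<in>T. f t \<in> L \<and> (\<forall>b\<in>U t. (b, f t) \<in> |L| )"
    by metis
  define D where "D t = underS |L| (f t)" for t
  have "D t \<subseteq> L \<and> |D t| <o |L|" if "t \<in> T" for t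
  proof
    show "D t \<subseteq> L"
      using Order_Relation.underS_Field[of "|L|" "f t"] unfolding D_def Field_card_of .
    show "|D t| <o |L|"
      unfolding D_def by (rule card_of_underS_ordLess) (use f that in blast)
  qed
  moreover have "|{t\<in>T. \<alpha> \<notin> D t}| <o |T|" if "\<alpha> \<in> L" for \<alpha>
  proof -
    have "\<exists>k\<in>K. \<alpha> \<noteq> k \<and> (\<alpha>, k) \<in> |L|"
      using K(2) that unfolding cofinal_def Field_card_of by (rule bspec)
    then obtain k where "k \<in> K" "\<alpha> \<noteq> k" "(\<alpha>, k) \<in> |L|" by blast
    then have k: "k \<in> K" "\<alpha> \<in> underS |L| k" by (auto intro: underS_I)
    then obtain t0 where t0: "t0 \<in> T" "h t0 = k" using h unfolding bij_betw_def by blast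
    have "{t\<in>T. \<alpha> \<notin> D t} \<subseteq> underS |T| t0"
    proof (intro subsetI; rule ccontr)
      fix t assume t: "t \<in> {t\<in>T. \<alpha> \<notin> D t}" "t \<notin> underS |T| t0"
      then have "t0 \<in> under |T| t"
        using card_of_rel_if_notin_underS[OF t0(1)] unfolding under_def by blast
      then have "k \<in> U t" unfolding U_def using t0(2) by blast
      moreover have "\<forall>b\<in>U t. (b, f t) \<in> |L|" using f t(1) by simp
      ultimately have "(k, f t) \<in> |L|" by simp
      then have "underS |L| k \<subseteq> D t"
        unfolding D_def by (rule underS_incr[OF trans_card_of antisym_card_of])
      then have "\<alpha> \<in> D t" using k(2) by blast
      then show False using t(1) by blast
    qed
    then show ?thesis
      by (rule ordLeq_ordLess_trans[OF card_of_mono1 card_of_underS_ordLess[OF t0(1)]])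
  qed
  ultimately show ?thesis unfolding eventual_small_cover_def by blast
qed

section \<open>The upper bound below theta^{+theta}\<close>

lemma cardSuc_ordLess_if_not_regularCard:
  assumes "infinite N" "|N| <o |A|" "\<not> regularCard |A|"
  shows "cardSuc |N| <o |A|"
proof -
  have CN: "Cinfinite |N|"
    using assms(1) by (simp add: cinfinite_def Field_card_of card_of_card_order_on)
  have le: "cardSuc |N| \<le>o |A|"
    using cardSuc_ordLess_ordLeq[OF card_of_Card_order card_of_Card_order, THEN iffD1, OF assms(2)] .
  have "\<not> cardSuc |N| =o |A|"
  proof
    assume "cardSuc |N| =o |A|"
    then have "regularCard |A|"
      by (rule regularCard_ordIso[OF _ Cinfinite_cardSuc[OF CN] regularCard_cardSuc[OF CN]])
    then show False using assms(3) by blast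
  qed
  then show ?thesis using le by (simp add: ordLeq_iff_ordLess_or_ordIso)
qed

lemma bounded_small_segments_if_cardSuc_ordLess:
  assumes "cardSuc |N| <o |A|"
  shows "\<exists>a\<in>A. {x\<in>A. |underS |A| x| \<le>o |N|} \<subseteq> underS |A| a"
proof -
  obtain a where a: "a \<in> A" "cardSuc |N| =o Restr |A| (underS |A| a)"
    using ordLess_iff_ordIso_Restr[OF card_of_Well_order cardSuc_Well_order[OF card_of_Card_order],
        THEN iffD1, OF assms]
    by (auto simp: Field_card_of)
  have "Field (Restr |A| (underS |A| a)) = underS |A| a"
    by (rule Field_Restr_ofilter[OF card_of_Well_order wo_rel.underS_ofilter[OF wo_rel_card_of]])
  then have "|Field (cardSuc |N| )| =o |underS |A| a|" using card_of_cong[OF a(2)] by simp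
  then have "cardSuc |N| =o |underS |A| a|"
    by (rule ordIso_transitive[OF ordIso_symmetric[OF
          card_of_Field_ordIso[OF cardSuc_Card_order[OF card_of_Card_order]]]])
  then have big: "|N| <o |underS |A| a|"
    by (rule ordLess_ordIso_trans[OF cardSuc_greater[OF card_of_Card_order]])
  have "x \<in> underS |A| a" if x: "x \<in> A" "|underS |A| x| \<le>o |N|" for x
  proof (rule ccontr)
    assume "x \<notin> underS |A| a"
    then have "underS |A| a \<subseteq> underS |A| x"
      by (rule underS_incr[OF trans_card_of antisym_card_of card_of_rel_if_notin_underS[OF a(1) x(1)]])
    then have "|underS |A| a| \<le>o |N|" by (rule ordLeq_transitive[OF card_of_mono1 x(2)])
    then show False using big not_ordLess_ordLeq by blast
  qed
  then show ?thesis using a(1) by blast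
qed

lemma obtain_card_representatives:
  obtains R where "R \<subseteq> S" "\<forall>a\<in>S. \<exists>r\<in>R. |C a| =o |C r|"
    "\<forall>r\<in>R. \<forall>s\<in>R. |C r| =o |C s| \<longrightarrow> r = s"
proof -
  define rep where "rep a = (SOME b. b \<in> S \<and> |C a| =o |C b| )" for a
  have rep: "rep a \<in> S \<and> |C a| =o |C (rep a)|" if "a \<in> S" for a
    unfolding rep_def by (rule someI[of _ a]) (use that card_of_refl in blast)
  have rep_eq: "rep a = rep b" if "|C a| =o |C b|" for a b
  proof -
    have "|C a| =o |C c| \<longleftrightarrow> |C b| =o |C c|" for c
      using ordIso_transitive[OF ordIso_symmetric[OF that]] ordIso_transitive[OF that] by blast
    then show ?thesis unfolding rep_def by simp
  qed
  show thesis
  proof (rule that[of "rep ` S"])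
    show "rep ` S \<subseteq> S" "\<forall>a\<in>S. \<exists>r\<in>rep ` S. |C a| =o |C r|" using rep by auto
    show "\<forall>r\<in>rep ` S. \<forall>s\<in>rep ` S. |C r| =o |C s| \<longrightarrow> r = s"
    proof (intro ballI impI)
      fix r s assume "r \<in> rep ` S" "s \<in> rep ` S" and rs: "|C r| =o |C s|"
      then obtain a b where ab: "a \<in> S" "b \<in> S" "r = rep a" "s = rep b" by blast
      have "|C a| =o |C b|"
        using ordIso_transitive[OF ordIso_transitive[OF conjunct2[OF rep[OF ab(1)]] rs[unfolded ab(3,4)]]
            ordIso_symmetric[OF conjunct2[OF rep[OF ab(2)]]]] .
      then show "r = s" using rep_eq ab(3,4) by simp
    qed
  qed
qed

lemma card_of_ordLess_if_below_plus_theta: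
  assumes bp: "below_plus_theta T L"
    and C: "\<forall>r\<in>R. C r \<subseteq> L \<and> |T| \<le>o |C r| \<and> |C r| <o |L|"
    and distinct: "\<forall>r\<in>R. \<forall>s\<in>R. |C r| =o |C s| \<longrightarrow> r = s"
  shows "|R| <o |T|"
proof (rule ccontr)
  assume "\<not> |R| <o |T|"
  then obtain j where j: "inj_on j T" "j ` T \<subseteq> R"
    using card_of_ordLeq[THEN iffD2, OF card_of_ordLeq_if_not_ordLess] by blast
  have "\<forall>t\<in>T. C (j t) \<subseteq> L \<and> |T| \<le>o |C (j t)| \<and> |C (j t)| <o |L|"
    using C j(2) by blast
  moreover have "\<forall>s\<in>T. \<forall>t\<in>T. s \<noteq> t \<longrightarrow> \<not> |C (j s)| =o |C (j t)|"
    using distinct j unfolding inj_on_def by blast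
  ultimately have "\<exists>A. (\<forall>t\<in>T. A t \<subseteq> L \<and> |T| \<le>o |A t| \<and> |A t| <o |L| ) \<and>
      (\<forall>s\<in>T. \<forall>t\<in>T. s \<noteq> t \<longrightarrow> \<not> |A s| =o |A t| )"
    by (intro exI[of _ "\<lambda>t. C (j t)"]) simp
  then show False using bp unfolding below_plus_theta_def by blast
qed

lemma obtain_segment_cardinalities:
  assumes bp: "below_plus_theta T L" and AL: "A \<subseteq> L"
  obtains R where "R \<subseteq> A" "|R| <o |T|" "\<forall>r\<in>R. |T| \<le>o |underS |A| r|"
    "\<forall>x\<in>A. |T| \<le>o |underS |A| x| \<longrightarrow> (\<exists>r\<in>R. |underS |A| x| =o |underS |A| r| )"
proof -
  define A0 where "A0 = {a\<in>A. |T| \<le>o |underS |A| a|}"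
  obtain R where R: "R \<subseteq> A0" "\<forall>a\<in>A0. \<exists>r\<in>R. |underS |A| a| =o |underS |A| r|"
      "\<forall>r\<in>R. \<forall>s\<in>R. |underS |A| r| =o |underS |A| s| \<longrightarrow> r = s"
    by (rule obtain_card_representatives[of A0 "underS |A|"])
  have "|R| <o |T|"
  proof (rule card_of_ordLess_if_below_plus_theta[OF bp _ R(3)])
    show "\<forall>r\<in>R. underS |A| r \<subseteq> L \<and> |T| \<le>o |underS |A| r| \<and> |underS |A| r| <o |L|"
    proof
      fix r assume "r \<in> R"
      then have r: "r \<in> A" "|T| \<le>o |underS |A| r|" using R(1) unfolding A0_def by auto
      have "underS |A| r \<subseteq> L"
        using Order_Relation.underS_Field[of "|A|" r] AL unfolding Field_card_of by blast
      moreover have "|underS |A| r| <o |L|"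
        by (rule ordLess_ordLeq_trans[OF card_of_underS_ordLess[OF r(1)] card_of_mono1[OF AL]])
      ultimately show "underS |A| r \<subseteq> L \<and> |T| \<le>o |underS |A| r| \<and> |underS |A| r| <o |L|"
        using r(2) by blast
    qed
  qed
  then show thesis using that R(1,2) unfolding A0_def by blast
qed

lemma cofinality_ordLess_if_singular:
  assumes T: "infinite T" and bp: "below_plus_theta T L" and AL: "A \<subseteq> L"
    and TA: "|T| <o |A|" and sing: "\<not> regularCard |A|"
  obtains K where "K \<subseteq> A" "|K| <o |T|" "A \<subseteq> (\<Union>k\<in>K. underS |A| k)"
proof -
  obtain R where R: "R \<subseteq> A" "|R| <o |T|" "\<forall>r\<in>R. |T| \<le>o |underS |A| r|"
    "\<forall>x\<in>A. |T| \<le>o |underS |A| x| \<longrightarrow> (\<exists>r\<in>R. |underS |A| x| =o |underS |A| r| )"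
    using obtain_segment_cardinalities[OF bp AL] by blast
  \<comment> \<open>The successor of each of these fewer than theta cardinals, and that of theta itself,
    is still below the singular cardinal of A, so the segments of that size are bounded.\<close>
  obtain aT where aT: "aT \<in> A" "{x\<in>A. |underS |A| x| \<le>o |T|} \<subseteq> underS |A| aT"
    using bounded_small_segments_if_cardSuc_ordLess[OF cardSuc_ordLess_if_not_regularCard[OF T TA sing]]
    by blast
  have "\<forall>r\<in>R. \<exists>a. a \<in> A \<and> {x\<in>A. |underS |A| x| \<le>o |underS |A| r|} \<subseteq> underS |A| a"
  proof
    fix r assume "r \<in> R"
    then have r: "r \<in> A" "|T| \<le>o |underS |A| r|" using R(1,3) by auto
    have "infinite (underS |A| r)" using card_of_ordLeq_finite[OF r(2)] T by blast
    then have "cardSuc |underS |A| r| <o |A|"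
      by (rule cardSuc_ordLess_if_not_regularCard[OF _ card_of_underS_ordLess[OF r(1)] sing])
    then show "\<exists>a. a \<in> A \<and> {x\<in>A. |underS |A| x| \<le>o |underS |A| r|} \<subseteq> underS |A| a"
      using bounded_small_segments_if_cardSuc_ordLess by blast
  qed
  then obtain b where b: "\<forall>r\<in>R. b r \<in> A \<and> {x\<in>A. |underS |A| x| \<le>o |underS |A| r|} \<subseteq> underS |A| (b r)"
    by (rule bchoice[elim_format]) blast
  show thesis
  proof (rule that[of "insert aT (b ` R)"])
    show "insert aT (b ` R) \<subseteq> A" using aT(1) b by blast
    show "|insert aT (b ` R)| <o |T|"
      by (rule card_of_insert_ordLess_infinite[OF T ordLeq_ordLess_trans[OF card_of_image R(2)]])
    show "A \<subseteq> (\<Union>k\<in>insert aT (b ` R). underS |A| k)"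
    proof
      fix x assume x: "x \<in> A"
      show "x \<in> (\<Union>k\<in>insert aT (b ` R). underS |A| k)"
      proof (cases "|underS |A| x| \<le>o |T|")
        case True
        then show ?thesis using aT(2) x by blast
      next
        case False
        then have "|T| \<le>o |underS |A| x|"
          by (rule ordLess_imp_ordLeq[OF card_of_ordLess_if_not_ordLeq])
        then obtain r where r: "r \<in> R" "|underS |A| x| =o |underS |A| r|" using R(4) x by blast
        then have "x \<in> underS |A| (b r)" using b x ordIso_imp_ordLeq[OF r(2)] by blast
        then show ?thesis using r(1) by blast
      qed
    qed
  qed
qed

lemma concentrated_on_initial_segment:
  assumes T: "infinite T" "regularCard |T|" and bp: "below_plus_theta T L"
    and AL: "A \<subseteq> L" and TA: "|T| <o |A|" and X: "X \<subseteq> A" "|X| =o |T|"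
  shows "\<exists>a\<in>A. |T| \<le>o |X \<inter> under |A| a|"
proof (cases "regularCard |A|")
  case True
  have "\<not> cofinal X |A|"
  proof
    assume "cofinal X |A|"
    then have "|X| =o |A|" using True X(1) unfolding regularCard_def Field_card_of by blast
    then have "|T| =o |A|" by (rule ordIso_transitive[OF ordIso_symmetric[OF X(2)]])
    then show False using TA not_ordLess_ordIso by blast
  qed
  then obtain a where a: "a \<in> A" "\<forall>b\<in>X. (b, a) \<in> |A|"
    using bounded_if_not_cofinal[OF X(1)] by blast
  then have "X \<inter> under |A| a = X" unfolding under_def by blast
  then have "|T| \<le>o |X \<inter> under |A| a|"
    using ordIso_imp_ordLeq[OF ordIso_symmetric[OF X(2)]] by simp
  then show ?thesis using a(1) by blast
next
  case False
  then obtain K where K: "K \<subseteq> A" "|K| <o |T|" "A \<subseteq> (\<Union>k\<in>K. underS |A| k)"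
    using cofinality_ordLess_if_singular[OF T(1) bp AL TA] by blast
  have X_cover: "X \<subseteq> (\<Union>k\<in>K. X \<inter> under |A| k)"
  proof
    fix x assume "x \<in> X"
    then obtain k where "k \<in> K" "x \<in> underS |A| k" using K(3) X(1) by blast
    then show "x \<in> (\<Union>k\<in>K. X \<inter> under |A| k)"
      using \<open>x \<in> X\<close> underS_subset_under[of "|A|" k] by blast
  qed
  show ?thesis
  proof (rule ccontr)
    assume "\<not> ?thesis"
    then have small: "\<forall>k\<in>K. |X \<inter> under |A| k| <o |T|"
      using K(1) card_of_ordLess_if_not_ordLeq by blast
    have "Cinfinite |T|"
      using T(1) by (simp add: cinfinite_def Field_card_of card_of_card_order_on)
    then have "|\<Union>k\<in>K. X \<inter> under |A| k| <o |T|"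
      by (rule card_of_UNION_ordLess_infinite_Field_regularCard[OF T(2) _ K(2) small])
    then have "|X| <o |T|" by (rule ordLeq_ordLess_trans[OF card_of_mono1[OF X_cover]])
    then show False using X(2) not_ordLess_ordIso by blast
  qed
qed

lemma m_family_singleton:
  assumes "|A| =o |T|"
  shows "m_family T A {A}"
  using assms unfolding m_family_def subsets_of_size_def by (auto simp: Int_absorb2)

lemma m_family_UNION:
  assumes F: "\<forall>i\<in>I. m_family T (U i) (F i)" and U: "\<forall>i\<in>I. U i \<subseteq> A"
    and concentrated: "\<forall>X\<in>subsets_of_size T A. \<exists>i\<in>I. |T| \<le>o |X \<inter> U i|"
  shows "m_family T A (\<Union>i\<in>I. F i)"
  unfolding m_family_def
proof
  show "(\<Union>i\<in>I. F i) \<subseteq> subsets_of_size T A"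
    using F U unfolding m_family_def subsets_of_size_def by blast
  show "\<forall>X\<in>subsets_of_size T A. \<exists>Y\<in>(\<Union>i\<in>I. F i). |X \<inter> Y| =o |T|"
  proof
    fix X assume X: "X \<in> subsets_of_size T A"
    then obtain i where i: "i \<in> I" "|T| \<le>o |X \<inter> U i|" using concentrated by blast
    have XT: "|X| =o |T|" using X unfolding subsets_of_size_def by blast
    have "|X \<inter> U i| =o |T|" using card_of_subset_ordIso[of "X \<inter> U i" X T] XT i(2) by blast
    then have "X \<inter> U i \<in> subsets_of_size T (U i)" unfolding subsets_of_size_def by blast
    then obtain Y where Y: "Y \<in> F i" "|X \<inter> U i \<inter> Y| =o |T|"
      using F i(1) unfolding m_family_def by blast
    have "|T| \<le>o |X \<inter> Y|"
      using ordLeq_transitive[OF ordIso_imp_ordLeq[OF ordIso_symmetric[OF Y(2)]]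
          card_of_mono1[of "X \<inter> U i \<inter> Y" "X \<inter> Y"]] by blast
    then have "|X \<inter> Y| =o |T|" using card_of_subset_ordIso[of "X \<inter> Y" X T] XT by blast
    then show "\<exists>Y\<in>(\<Union>i\<in>I. F i). |X \<inter> Y| =o |T|" using Y(1) i(1) by blast
  qed
qed

lemma m_leq_from_initial_segments:
  assumes A: "infinite A"
    and segments: "\<forall>a\<in>A. |T| \<le>o |under |A| a| \<longrightarrow> m_leq T (under |A| a) (under |A| a)"
    and concentrated: "\<forall>X\<in>subsets_of_size T A. \<exists>a\<in>A. |T| \<le>o |X \<inter> under |A| a|"
  shows "m_leq T A A"
proof -
  define I where "I = {a\<in>A. |T| \<le>o |under |A| a|}"
  have under_A: "under |A| a \<subseteq> A" for a
    using under_Field[of "|A|" a] by (simp add: Field_card_of)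
  have "\<forall>a\<in>I. \<exists>F. m_family T (under |A| a) F \<and> |F| \<le>o |under |A| a|"
    using segments unfolding I_def m_leq_def by blast
  then obtain F where F: "\<forall>a\<in>I. m_family T (under |A| a) (F a) \<and> |F a| \<le>o |under |A| a|"
    by (rule bchoice[elim_format]) blast
  have "m_family T A (\<Union>a\<in>I. F a)"
  proof (rule m_family_UNION)
    show "\<forall>a\<in>I. m_family T (under |A| a) (F a)" using F by blast
    show "\<forall>a\<in>I. under |A| a \<subseteq> A" using under_A by blast
    show "\<forall>X\<in>subsets_of_size T A. \<exists>a\<in>I. |T| \<le>o |X \<inter> under |A| a|"
    proof
      fix X assume "X \<in> subsets_of_size T A"
      then obtain a where a: "a \<in> A" "|T| \<le>o |X \<inter> under |A| a|" using concentrated by blast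
      have "|T| \<le>o |under |A| a|"
        using ordLeq_transitive[OF a(2) card_of_mono1[of "X \<inter> under |A| a" "under |A| a"]] by blast
      then show "\<exists>a\<in>I. |T| \<le>o |X \<inter> under |A| a|" using a unfolding I_def by blast
    qed
  qed
  moreover have "|\<Union>a\<in>I. F a| \<le>o |A|"
  proof (rule card_of_UNION_ordLeq_infinite[OF A])
    show "|I| \<le>o |A|" unfolding I_def by (rule card_of_mono1) blast
    show "\<forall>a\<in>I. |F a| \<le>o |A|"
      using F ordLeq_transitive[OF _ card_of_mono1[OF under_A]] by blast
  qed
  ultimately show ?thesis unfolding m_leq_def by blast
qed

lemma m_leq_if_below_plus_theta:
  assumes T: "infinite T" "regularCard |T|" and bp: "below_plus_theta T L"
  shows "A \<subseteq> L \<Longrightarrow> |T| \<le>o |A| \<Longrightarrow> m_leq T A A"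
proof (induction A rule: wf_induct[OF wf_inv_image[OF wf_ordLess, of card_of]])
  case (1 A)
  have IH: "m_leq T B B" if "|B| <o |A|" "B \<subseteq> L" "|T| \<le>o |B|" for B
    using 1(1) that by simp
  have AL: "A \<subseteq> L" and TA: "|T| \<le>o |A|" using 1(2,3) by auto
  have A: "infinite A" using T(1) card_of_ordLeq_finite[OF TA] by blast
  show ?case
  proof (cases "|T| =o |A|")
    case True
    have "m_family T A {A}" by (rule m_family_singleton[OF ordIso_symmetric[OF True]])
    moreover have "|{A}| \<le>o |A|" using A card_of_singl_ordLeq[of A A] by auto
    ultimately show ?thesis unfolding m_leq_def by blast
  next
    case False
    then have TA': "|T| <o |A|" using TA by (simp add: ordLeq_iff_ordLess_or_ordIso)
    show ?thesis
    proof (rule m_leq_from_initial_segments[OF A])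
      show "\<forall>a\<in>A. |T| \<le>o |under |A| a| \<longrightarrow> m_leq T (under |A| a) (under |A| a)"
      proof (intro ballI impI)
        fix a assume "a \<in> A" "|T| \<le>o |under |A| a|"
        moreover have "under |A| a \<subseteq> L"
          using under_Field[of "|A|" a] AL by (simp add: Field_card_of)
        ultimately show "m_leq T (under |A| a) (under |A| a)"
          using IH card_of_under_ordLess[OF A] by blast
      qed
      show "\<forall>X\<in>subsets_of_size T A. \<exists>a\<in>A. |T| \<le>o |X \<inter> under |A| a|"
        using concentrated_on_initial_segment[OF T bp AL TA'] unfolding subsets_of_size_def by blast
    qed
  qed
qed

theorem proposition2p2:
  fixes T :: "'b set" and L :: "'a set"
  assumes "infinite L"
    and "infinite T" and "regularCard (card_of T)"
  shows "(cf_is T L \<and> card_of T <o card_of L \<longrightarrow> m_greater T L L)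
       \<and> (card_of T <o card_of L \<longrightarrow> m_geq T L L)
       \<and> (card_of T <o card_of L \<and> below_plus_theta T L \<longrightarrow> m_geq T L L \<and> m_leq T L L)"
proof (intro conjI impI)
  assume "cf_is T L \<and> |T| <o |L|"
  then show "m_greater T L L"
    using eventual_small_cover_if_cf[OF assms(2)] m_greater_if_eventual_small_cover[OF assms(1,2)]
    by blast
next
  assume "|T| <o |L|"
  then show "m_geq T L L" by (rule m_geq_if_ordLess[OF assms(1,2)])
next
  assume "|T| <o |L| \<and> below_plus_theta T L"
  then show "m_geq T L L" using m_geq_if_ordLess[OF assms(1,2)] by blast
next
  assume "|T| <o |L| \<and> below_plus_theta T L"
  then show "m_leq T L L" using m_leq_if_below_plus_theta[OF assms(2,3)] ordLess_imp_ordLeq by blast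
qed

end
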